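(* Let $c>0$ and $\eta_0>0$. For measurable complex-valued functions $z_1,z_2$ on $\mathbb{R}$ with $\sup_{\omega\in\mathbb{R},i=1,2}|z_i(\omega)|\le1$, write $z=(z_1,z_2)$ and define on $\mathbb{R}_+\times\mathbb{R}$ $$\Psi_z(\tilde\lambda,\omega)=\frac{z_1(\omega)}{(c+i\omega+\tilde\lambda)(c+i\omega+\tilde\lambda-\tilde\lambda z_2(\omega))}.$$ Then: (i) the function $\tilde\lambda\mapsto\int_{-\infty}^\infty\Psi_z(\tilde\lambda,\omega)d\omega$ is continuously differentiable on $\mathbb{R}_+$ and its derivative is bounded over $\tilde\lambda\in[0,\eta_0]$ by a bound independent of $z$; (ii) there exists $K>0$ depending only on $c$ and $\eta_0$ such that for any $W\ge1$ or $W=\infty$ and any $\tilde z=(\tilde z_1,\tilde z_2)$ also satisfying $\sup_{\omega,i}|\tilde z_i(\omega)|\le1$, $$\sup_{\tilde\lambda\in[0,\eta_0]}\Big|\int\Psi_z(\tilde\lambda,\omega)d\omega-\int\Psi_{\tilde z}(\tilde\lambda,\omega)d\omega\Big|\le K\Big(\max_{i=1,2}\sup_{\omega\in[-W,W]}|z_i(\omega)-\tilde z_i(\omega)|+\frac1W\Big).$$ *)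

theory Defs
  imports "HOL-Analysis.Analysis"
begin

definition Psi :: "real \<Rightarrow> (real \<Rightarrow> complex) \<Rightarrow> (real \<Rightarrow> complex) \<Rightarrow> real \<Rightarrow> real \<Rightarrow> complex" where
  "Psi c z1 z2 lam w =
     z1 w / ((complex_of_real c + \<i> * complex_of_real w + complex_of_real lam) *
             (complex_of_real c + \<i> * complex_of_real w + complex_of_real lam
               - complex_of_real lam * z2 w))"

definition PsiInt :: "real \<Rightarrow> (real \<Rightarrow> complex) \<Rightarrow> (real \<Rightarrow> complex) \<Rightarrow> real \<Rightarrow> complex" where
  "PsiInt c z1 z2 lam = integral\<^sup>L lborel (\<lambda>w. Psi c z1 z2 lam w)"

definition admissible :: "(real \<Rightarrow> complex) \<Rightarrow> (real \<Rightarrow> complex) \<Rightarrow> bool" where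
  "admissible z1 z2 \<longleftrightarrow>
     z1 \<in> borel_measurable borel \<and> z2 \<in> borel_measurable borel \<and>
     (\<forall>w. norm (z1 w) \<le> 1 \<and> norm (z2 w) \<le> 1)"

end

theory Submission
  imports Defs "HOL-Probability.Sinc_Integral"
begin

text \<open>
  For \<open>|\<zeta>| \<le> 1\<close> and \<open>0 \<le> lam \<le> L\<close> the denominator \<open>c + \<i> w + lam - lam \<zeta>\<close> has real part at
  least \<open>c\<close> and modulus at least \<open>sqrt (c\<^sup>2 + w\<^sup>2) - 2 L\<close>, hence modulus at least
  \<open>c sqrt (c\<^sup>2 + w\<^sup>2) / (c + 2 L)\<close>. So \<open>Psi\<close>, its divided differences in \<open>lam\<close> and its variation
  in \<open>(z1, z2)\<close> are bounded by constants times the integrable weight \<open>1 / (c\<^sup>2 + w\<^sup>2)\<close>, uniformly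
  for \<open>lam \<in> [0, L]\<close>. The divided difference has a closed form that is jointly continuous in both
  arguments, so dominated convergence gives the derivative of the integral and its continuity.
  For the Lipschitz estimate the integral is split at \<open>|w| = W\<close>: inside, the pointwise variation
  bound applies; outside, the crude bound \<open>|Psi_z| + |Psi_y|\<close> is used, and the weight has tail
  mass at most \<open>2 / W\<close>.
\<close>

lemma norm_divide_prod_list_le:
  fixes a :: "'a::real_normed_field"
  assumes "norm a \<le> \<alpha>" "0 < \<rho>" "\<And>d. d \<in> set ds \<Longrightarrow> \<rho> \<le> norm d" "length ds = n"
  shows "norm (a / prod_list ds) \<le> \<alpha> / \<rho> ^ n"
  using assms(3) unfolding assms(4)[symmetric]
proof (induction ds)
  case Nil
  then show ?case using assms(1) by simp
next
  case (Cons d ds)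
  have "norm (a / prod_list (d # ds)) = norm (a / prod_list ds) / norm d"
    by (simp add: norm_divide norm_mult field_simps)
  also have "\<dots> \<le> (\<alpha> / \<rho> ^ length ds) / \<rho>"
    using Cons assms(1,2) by (intro frac_le) (auto intro: order_trans[OF norm_ge_zero])
  finally show ?case by (simp add: mult.commute)
qed

lemma divide_cube_le_divide_square:
  fixes r :: real
  assumes "0 < c" "c \<le> r" "0 \<le> K"
  shows "K / r^3 \<le> K / (c * r^2)"
proof (rule divide_left_mono)
  have "c * r^2 \<le> r * r^2"
    using assms(2) by (rule mult_right_mono) simp
  then show "c * r^2 \<le> r^3"
    by (simp only: power3_eq_cube power2_eq_square mult.assoc)
  show "0 < r^3 * (c * r^2)"
    using assms by simp
qed (rule assms(3))

lemma norm_diff_le_SUP: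
  fixes f g :: "'a \<Rightarrow> 'b::real_normed_vector"
  assumes "\<And>x. norm (f x) \<le> 1" "\<And>x. norm (g x) \<le> 1" "x \<in> A"
  shows "norm (f x - g x) \<le> (SUP x\<in>A. norm (f x - g x))"
proof (rule cSUP_upper[OF assms(3)])
  have "norm (f x - g x) \<le> 2" for x
    using norm_triangle_ineq4[of "f x" "g x"] assms(1,2)[of x] by linarith
  then show "bdd_above ((\<lambda>x. norm (f x - g x)) ` A)"
    by (intro bdd_aboveI[where M=2]) auto
qed

lemma SUP_norm_diff_nonneg:
  fixes f g :: "'a \<Rightarrow> 'b::real_normed_vector"
  assumes "\<And>x. norm (f x) \<le> 1" "\<And>x. norm (g x) \<le> 1" "x \<in> A"
  shows "0 \<le> (SUP x\<in>A. norm (f x - g x))"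
  by (rule order_trans[OF norm_ge_zero norm_diff_le_SUP[OF assms]])

lemma has_vector_derivative_iff_difference_quotient:
  fixes f :: "real \<Rightarrow> 'a::real_normed_vector"
  shows "(f has_vector_derivative D) (at x within S) \<longleftrightarrow>
    ((\<lambda>y. (f y - f x) /\<^sub>R (y - x)) \<longlongrightarrow> D) (at x within S)"
proof -
  have "norm (f y - f x - (y - x) *\<^sub>R D) / norm (y - x) = norm ((f y - f x) /\<^sub>R (y - x) - D)"
    if "y \<noteq> x" for y
  proof -
    have "(f y - f x) /\<^sub>R (y - x) - D = (f y - f x - (y - x) *\<^sub>R D) /\<^sub>R (y - x)"
      using that by (simp add: scaleR_diff_right)
    then show ?thesis
      by (simp add: divide_inverse_commute)
  qed
  then have "((\<lambda>y. norm (f y - f x - (y - x) *\<^sub>R D) / norm (y - x)) \<longlongrightarrow> 0) (at x within S)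
      \<longleftrightarrow> ((\<lambda>y. norm ((f y - f x) /\<^sub>R (y - x) - D)) \<longlongrightarrow> 0) (at x within S)"
    by (intro Lim_cong_within) auto
  also have "\<dots> \<longleftrightarrow> ((\<lambda>y. (f y - f x) /\<^sub>R (y - x)) \<longlongrightarrow> D) (at x within S)"
    by (simp only: tendsto_norm_zero_iff LIM_zero_iff)
  finally show ?thesis
    by (simp add: has_vector_derivative_def has_derivative_iff_norm bounded_linear_scaleR_left)
qed

lemma tendsto_integral_dominated:
  fixes f :: "'a::first_countable_topology \<Rightarrow> 'b \<Rightarrow> 'c::{banach, second_countable_topology}"
  assumes "\<And>t. f t \<in> borel_measurable M" "l \<in> borel_measurable M" "integrable M g"
    and "\<forall>\<^sub>F t in at t0 within S. AE x in M. norm (f t x) \<le> g x"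
    and "AE x in M. ((\<lambda>t. f t x) \<longlongrightarrow> l x) (at t0 within S)"
  shows "((\<lambda>t. integral\<^sup>L M (f t)) \<longlongrightarrow> integral\<^sup>L M l) (at t0 within S)"
proof (unfold tendsto_at_iff_sequentially, intro allI impI)
  fix X :: "nat \<Rightarrow> 'a"
  assume "\<forall>i. X i \<in> S - {t0}" "X \<longlonglongrightarrow> t0"
  then have X: "filterlim X (at t0 within S) sequentially"
    by (auto simp: filterlim_at)
  from filterlim_iff[THEN iffD1, OF X, rule_format, OF assms(4)]
  obtain N where N: "\<And>n. N \<le> n \<Longrightarrow> AE x in M. norm (f (X n) x) \<le> g x"
    by (auto simp: eventually_sequentially)
  show "((\<lambda>t. integral\<^sup>L M (f t)) \<circ> X) \<longlonglongrightarrow> integral\<^sup>L M l"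
    unfolding comp_def
  proof (rule LIMSEQ_offset, rule integral_dominated_convergence)
    show "AE x in M. norm (f (X (n + N)) x) \<le> g x" for n
      by (rule N) simp
    show "AE x in M. (\<lambda>n. f (X (n + N)) x) \<longlonglongrightarrow> l x"
      using assms(5) by eventually_elim (intro LIMSEQ_ignore_initial_segment filterlim_compose[OF _ X])
  qed (use assms in auto)
qed

lemma integrable_inverse_c2_plus_square:
  assumes "c > 0"
  shows "integrable lborel (\<lambda>w::real. 1 / (c^2 + w^2))"
proof -
  have "integrable lborel (\<lambda>x. 1 / c^2 * inverse (1 + x^2))"
    using integrable_inverse_1_plus_square by (simp add: set_integrable_def)
  then have "integrable lborel (\<lambda>x. 1 / (c^2 + (c * x)^2))"
    using assms by (simp add: power_mult_distrib field_simps)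
  then show ?thesis
    using assms lborel_integrable_real_affine_iff[where f="\<lambda>w. 1 / (c^2 + w^2)" and c=c and t=0]
    by simp
qed

lemma nn_integral_inverse_square_atLeast:
  assumes "W > 0"
  shows "(\<integral>\<^sup>+x. ennreal (1 / x^2) * indicator {W..} x \<partial>lborel) = ennreal (1 / W)"
proof -
  have "(\<integral>\<^sup>+x. ennreal (1 / x^2) * indicator {W..} x \<partial>lborel) = ennreal (0 - (- 1 / W))"
  proof (rule nn_integral_FTC_atLeast)
    show "((\<lambda>x. - 1 / x) has_real_derivative 1 / x^2) (at x)" if "W \<le> x" for x
      using that assms by (auto intro!: derivative_eq_intros simp: power2_eq_square)
    show "((\<lambda>x::real. - 1 / x) \<longlongrightarrow> 0) at_top"
      by (intro tendsto_divide_0[OF tendsto_const] filterlim_at_top_imp_at_infinity filterlim_ident)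
  qed auto
  then show ?thesis by simp
qed

lemma integral_tail_inverse_c2_plus_square:
  fixes W :: real
  assumes "W > 0"
  shows "(\<integral>w. indicator (- {-W..W}) w / (c^2 + w^2) \<partial>lborel) \<le> 2 / W"
proof -
  let ?f = "\<lambda>x::real. ennreal (1 / x^2) * indicator {W..} x"
  have "(\<integral>\<^sup>+w. ennreal (indicator (- {-W..W}) w / (c^2 + w^2)) \<partial>lborel)
      \<le> (\<integral>\<^sup>+x. ?f x + ?f (- x) \<partial>lborel)"
  proof (intro nn_integral_mono)
    fix x :: real
    have "1 / (c^2 + x^2) \<le> 1 / x^2" if "x \<noteq> 0"
      using that by (intro divide_left_mono) (auto intro!: mult_pos_pos add_nonneg_pos)
    then show "ennreal (indicator (- {-W..W}) x / (c^2 + x^2)) \<le> ?f x + ?f (- x)"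
      using assms by (auto simp: ennreal_leI split: split_indicator)
  qed
  also have "\<dots> = (\<integral>\<^sup>+x. ?f x \<partial>lborel) + (\<integral>\<^sup>+x. ?f (- x) \<partial>lborel)"
    by (rule nn_integral_add) auto
  also have "(\<integral>\<^sup>+x. ?f (- x) \<partial>lborel) = (\<integral>\<^sup>+x. ?f x \<partial>lborel)"
    using nn_integral_real_affine[of ?f "-1" 0] by simp
  also have "(\<integral>\<^sup>+x. ?f x \<partial>lborel) + (\<integral>\<^sup>+x. ?f x \<partial>lborel) = ennreal (2 / W)"
    using assms by (simp add: nn_integral_inverse_square_atLeast flip: ennreal_plus)
  finally have "(\<integral>\<^sup>+w. ennreal (indicator (- {-W..W}) w / (c^2 + w^2)) \<partial>lborel) \<le> ennreal (2 / W)" .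
  then show ?thesis
    using assms by (subst integral_eq_nn_integral) (auto intro!: enn2real_leI)
qed

definition denom :: "real \<Rightarrow> real \<Rightarrow> real \<Rightarrow> complex \<Rightarrow> complex" where
  "denom c w lam \<zeta> = complex_of_real c + \<i> * complex_of_real w + complex_of_real lam - complex_of_real lam * \<zeta>"

lemma Psi_eq_denom: "Psi c z1 z2 lam w = z1 w / (denom c w lam 0 * denom c w lam (z2 w))"
  by (simp add: Psi_def denom_def)

lemma norm_denom_ge:
  assumes "c > 0" "0 \<le> lam" "lam \<le> L" "norm \<zeta> \<le> 1"
  shows "c * sqrt (c^2 + w^2) / (c + 2*L) \<le> norm (denom c w lam \<zeta>)"
proof -
  let ?A = "complex_of_real c + \<i> * complex_of_real w"
  let ?r = "sqrt (c^2 + w^2)"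
  have "lam * Re \<zeta> \<le> lam"
    using assms abs_Re_le_cmod[of \<zeta>] by (metis abs_le_D1 mult_left_le order_trans)
  then have "c \<le> Re (denom c w lam \<zeta>)"
    by (simp add: denom_def)
  then have ge_c: "c \<le> norm (denom c w lam \<zeta>)"
    using complex_Re_le_cmod order_trans by blast
  have "norm (complex_of_real lam * (1 - \<zeta>)) \<le> lam * 2"
    unfolding norm_mult using assms norm_triangle_ineq4[of 1 \<zeta>] by (intro mult_mono) auto
  moreover have "norm ?A = ?r"
    by (simp add: cmod_def)
  moreover have "norm ?A - norm (complex_of_real lam * (1 - \<zeta>)) \<le> norm (denom c w lam \<zeta>)"
    using norm_diff_ineq[of ?A "complex_of_real lam * (1 - \<zeta>)"]
    by (simp add: denom_def algebra_simps)
  ultimately have ge_r: "?r - 2 * L \<le> norm (denom c w lam \<zeta>)"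
    using assms by linarith
  have "c * ?r \<le> c * norm (denom c w lam \<zeta>) + 2 * L * norm (denom c w lam \<zeta>)"
    using mult_left_mono[OF ge_r, of c] mult_left_mono[OF ge_c, of "2 * L"] assms
    by (simp add: algebra_simps)
  then show ?thesis
    using assms by (simp add: divide_le_eq algebra_simps)
qed

lemma denom_lower_bound_pos:
  assumes "c > 0" "0 \<le> L"
  shows "0 < c * sqrt (c^2 + w^2) / (c + 2*L)"
  using assms by (intro divide_pos_pos mult_pos_pos) (auto intro: add_pos_nonneg)

lemma denom_nonzero:
  assumes "c > 0" "0 \<le> lam" "norm \<zeta> \<le> 1"
  shows "denom c w lam \<zeta> \<noteq> 0"
  using denom_lower_bound_pos[OF assms(1,2), of w] norm_denom_ge[OF assms(1,2) order_refl assms(3), of w]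
  by auto

lemma continuous_denom [continuous_intros]:
  "continuous F f \<Longrightarrow> continuous F (\<lambda>x. denom c w (f x) \<zeta>)"
  unfolding denom_def by (intro continuous_intros)

lemma norm_Psi_le:
  assumes "c > 0" "0 \<le> lam" "lam \<le> L" "norm (z1 w) \<le> 1" "norm (z2 w) \<le> 1"
  shows "norm (Psi c z1 z2 lam w) \<le> ((c + 2*L) / c)^2 / (c^2 + w^2)"
proof -
  let ?r = "sqrt (c^2 + w^2)"
  have "norm (z1 w / prod_list [denom c w lam 0, denom c w lam (z2 w)])
      \<le> 1 / (c * ?r / (c + 2*L)) ^ 2"
    using assms by (intro norm_divide_prod_list_le denom_lower_bound_pos) (auto intro!: norm_denom_ge)
  also have "\<dots> = ((c + 2*L) / c)^2 / (c^2 + w^2)"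
    using assms by (simp add: power_divide power_mult_distrib)
  finally show ?thesis by (simp add: Psi_eq_denom)
qed

lemma Psi_diff_eq:
  assumes "c > 0" "0 \<le> lam" "norm (z2 w) \<le> 1" "norm (y2 w) \<le> 1"
  shows "Psi c z1 z2 lam w - Psi c y1 y2 lam w
    = (z1 w - y1 w) / (denom c w lam 0 * denom c w lam (z2 w))
      + y1 w * (complex_of_real lam * (z2 w - y2 w))
        / (denom c w lam 0 * denom c w lam (z2 w) * denom c w lam (y2 w))"
proof -
  let ?D = "denom c w lam"
  have "?D 0 \<noteq> 0" "?D (z2 w) \<noteq> 0" "?D (y2 w) \<noteq> 0"
    using assms by (auto simp: denom_nonzero)
  then have "Psi c z1 z2 lam w - Psi c y1 y2 lam w
      = (z1 w - y1 w) / (?D 0 * ?D (z2 w)) + y1 w * (?D (y2 w) - ?D (z2 w)) / (?D 0 * ?D (z2 w) * ?D (y2 w))"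
    by (simp add: Psi_eq_denom field_simps)
  also have "?D (y2 w) - ?D (z2 w) = complex_of_real lam * (z2 w - y2 w)"
    by (simp add: denom_def algebra_simps)
  finally show ?thesis .
qed

lemma norm_Psi_diff_le:
  assumes "c > 0" "0 \<le> lam" "lam \<le> L"
    and "norm (z1 w) \<le> 1" "norm (z2 w) \<le> 1" "norm (y1 w) \<le> 1" "norm (y2 w) \<le> 1"
    and "norm (z1 w - y1 w) \<le> \<delta>" "norm (z2 w - y2 w) \<le> \<delta>"
  shows "norm (Psi c z1 z2 lam w - Psi c y1 y2 lam w)
    \<le> \<delta> * (((c + 2*L) / c)^2 + L / c * ((c + 2*L) / c)^3) / (c^2 + w^2)"
proof -
  let ?r = "sqrt (c^2 + w^2)"
  let ?\<rho> = "c * ?r / (c + 2*L)"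
  let ?D = "denom c w lam"
  have \<rho>: "0 < ?\<rho>"
    using assms by (intro denom_lower_bound_pos) auto
  have "norm ((z1 w - y1 w) / prod_list [?D 0, ?D (z2 w)]) \<le> \<delta> / ?\<rho>^2"
    using assms \<rho> by (intro norm_divide_prod_list_le) (auto intro!: norm_denom_ge)
  also have "\<dots> = \<delta> * ((c + 2*L) / c)^2 / (c^2 + w^2)"
    using assms by (simp add: power_divide power_mult_distrib)
  finally have first: "norm ((z1 w - y1 w) / prod_list [?D 0, ?D (z2 w)])
      \<le> \<delta> * ((c + 2*L) / c)^2 / (c^2 + w^2)" .
  have "norm (y1 w * (complex_of_real lam * (z2 w - y2 w))) \<le> 1 * (L * \<delta>)"
    unfolding norm_mult using assms by (intro mult_mono) auto
  then have "norm (y1 w * (complex_of_real lam * (z2 w - y2 w)) / prod_list [?D 0, ?D (z2 w), ?D (y2 w)])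
      \<le> L * \<delta> / ?\<rho>^3"
    using assms \<rho> by (intro norm_divide_prod_list_le) (auto intro!: norm_denom_ge)
  also have "\<dots> = \<delta> * L * ((c + 2*L) / c)^3 / ?r^3"
    using assms by (simp add: power_divide power_mult_distrib)
  also have "\<dots> \<le> \<delta> * L * ((c + 2*L) / c)^3 / (c * ?r^2)"
    using assms order_trans[OF norm_ge_zero assms(8)] by (intro divide_cube_le_divide_square) auto
  also have "\<dots> = \<delta> * (L / c * ((c + 2*L) / c)^3) / (c^2 + w^2)"
    using assms by simp
  finally have second: "norm (y1 w * (complex_of_real lam * (z2 w - y2 w)) / prod_list [?D 0, ?D (z2 w), ?D (y2 w)])
      \<le> \<delta> * (L / c * ((c + 2*L) / c)^3) / (c^2 + w^2)" .
  show ?thesis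
    using norm_triangle_le[OF add_mono[OF first second]] assms
    by (simp add: Psi_diff_eq add_divide_distrib distrib_left mult.assoc)
qed

text \<open>The numerator comes from \<open>P lam - P mu = (lam - mu) ((c + \<i> w) (2 - \<zeta>) + (1 - \<zeta>) (lam + mu))\<close>
  for \<open>P t = denom c w t 0 * denom c w t \<zeta>\<close>; on the diagonal \<open>mu = lam\<close> it is the derivative of \<open>Psi\<close>.\<close>

definition Psi_slope :: "real \<Rightarrow> (real \<Rightarrow> complex) \<Rightarrow> (real \<Rightarrow> complex) \<Rightarrow> real \<Rightarrow> real \<Rightarrow> real \<Rightarrow> complex" where
  "Psi_slope c z1 z2 lam mu w =
     - z1 w * ((complex_of_real c + \<i> * complex_of_real w) * (2 - z2 w) + (1 - z2 w) * complex_of_real (lam + mu))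
     / (denom c w lam 0 * denom c w lam (z2 w) * denom c w mu 0 * denom c w mu (z2 w))"

lemma Psi_slope_eq:
  assumes "c > 0" "0 \<le> lam" "0 \<le> mu" "mu \<noteq> lam" "norm (z2 w) \<le> 1"
  shows "(Psi c z1 z2 mu w - Psi c z1 z2 lam w) /\<^sub>R (mu - lam) = Psi_slope c z1 z2 lam mu w"
proof -
  define P where "P t = denom c w t 0 * denom c w t (z2 w)" for t
  define N where "N = (complex_of_real c + \<i> * complex_of_real w) * (2 - z2 w) + (1 - z2 w) * complex_of_real (lam + mu)"
  have P: "P lam \<noteq> 0" "P mu \<noteq> 0"
    using assms by (auto simp: P_def denom_nonzero)
  have m: "complex_of_real (mu - lam) \<noteq> 0"
    using assms by simp
  have "(Psi c z1 z2 mu w - Psi c z1 z2 lam w) /\<^sub>R (mu - lam)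
      = z1 w * (P lam - P mu) / (P lam * P mu * complex_of_real (mu - lam))"
    using P m by (simp add: Psi_eq_denom P_def scaleR_conv_of_real field_simps)
  also have "P lam - P mu = complex_of_real (mu - lam) * - N"
    by (simp add: P_def N_def denom_def algebra_simps)
  also have "z1 w * (complex_of_real (mu - lam) * - N) / (P lam * P mu * complex_of_real (mu - lam))
      = - z1 w * N / (P lam * P mu)"
    using m by simp
  also have "\<dots> = Psi_slope c z1 z2 lam mu w"
    by (simp add: Psi_slope_def P_def N_def mult.assoc)
  finally show ?thesis .
qed

lemma norm_slope_numerator_le:
  assumes "c > 0" "0 \<le> lam" "lam \<le> L" "0 \<le> mu" "mu \<le> L" "norm \<zeta> \<le> 1"
  shows "norm ((complex_of_real c + \<i> * complex_of_real w) * (2 - \<zeta>) + (1 - \<zeta>) * complex_of_real (lam + mu))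
    \<le> (3*c + 4*L) / c * sqrt (c^2 + w^2)"
proof -
  let ?r = "sqrt (c^2 + w^2)"
  have "norm (complex_of_real c + \<i> * complex_of_real w) = ?r"
    by (simp add: cmod_def)
  then have "norm ((complex_of_real c + \<i> * complex_of_real w) * (2 - \<zeta>)) \<le> ?r * 3"
    unfolding norm_mult using assms norm_triangle_ineq4[of 2 \<zeta>] by (intro mult_mono) auto
  moreover have "norm (complex_of_real (lam + mu)) \<le> 2 * L"
    using assms by (simp del: of_real_add)
  then have "norm ((1 - \<zeta>) * complex_of_real (lam + mu)) \<le> 2 * (2 * L)"
    unfolding norm_mult using assms norm_triangle_ineq4[of 1 \<zeta>] by (intro mult_mono) auto
  moreover have "?r * 3 + 2 * (2 * L) \<le> (3*c + 4*L) / c * ?r"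
    using assms real_sqrt_sum_squares_ge1[of c w] by (simp add: field_simps mult_left_mono)
  ultimately show ?thesis
    by (meson add_mono norm_triangle_le order_trans)
qed

lemma norm_Psi_slope_le:
  assumes "c > 0" "0 \<le> lam" "lam \<le> L" "0 \<le> mu" "mu \<le> L" "norm (z1 w) \<le> 1" "norm (z2 w) \<le> 1"
  shows "norm (Psi_slope c z1 z2 lam mu w) \<le> (3*c + 4*L) * ((c + 2*L) / c)^4 / c^2 / (c^2 + w^2)"
proof -
  let ?r = "sqrt (c^2 + w^2)"
  let ?N = "(complex_of_real c + \<i> * complex_of_real w) * (2 - z2 w) + (1 - z2 w) * complex_of_real (lam + mu)"
  let ?K = "(3*c + 4*L) / c * ((c + 2*L) / c)^4"
  have r: "c \<le> ?r" using real_sqrt_sum_squares_ge1 .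
  have \<rho>: "0 < c * ?r / (c + 2*L)"
    using assms by (intro denom_lower_bound_pos) auto
  have N: "norm ?N \<le> (3*c + 4*L) / c * ?r"
    using assms by (intro norm_slope_numerator_le) auto
  have "norm (- z1 w * ?N) \<le> (3*c + 4*L) / c * ?r"
    unfolding norm_mult norm_minus_cancel using N assms(6)
    by (meson mult_left_le_one_le norm_ge_zero order_trans)
  then have "norm (- z1 w * ?N / prod_list [denom c w lam 0, denom c w lam (z2 w), denom c w mu 0, denom c w mu (z2 w)])
      \<le> (3*c + 4*L) / c * ?r / (c * ?r / (c + 2*L)) ^ 4"
    using assms \<rho> by (intro norm_divide_prod_list_le) (auto intro!: norm_denom_ge)
  then have "norm (Psi_slope c z1 z2 lam mu w) \<le> (3*c + 4*L) / c * ?r / (c * ?r / (c + 2*L)) ^ 4"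
    by (simp add: Psi_slope_def mult.assoc)
  also have "\<dots> = ?K / ?r^3"
    using assms r by (simp add: power_divide power_mult_distrib field_simps) algebra
  also have "\<dots> \<le> ?K / (c * ?r^2)"
    using assms r by (intro divide_cube_le_divide_square) auto
  also have "\<dots> = (3*c + 4*L) * ((c + 2*L) / c)^4 / c^2 / (c^2 + w^2)"
    using assms by (simp add: power2_eq_square)
  finally show ?thesis .
qed

lemma isCont_Psi_slope:
  assumes "c > 0" "0 \<le> fst p" "0 \<le> snd p" "norm (z2 w) \<le> 1"
  shows "isCont (\<lambda>q. Psi_slope c z1 z2 (fst q) (snd q) w) p"
  unfolding Psi_slope_def using assms by (intro continuous_intros) (auto simp: denom_nonzero)

lemma borel_measurable_Psi:
  assumes "admissible z1 z2"
  shows "(\<lambda>w. Psi c z1 z2 lam w) \<in> borel_measurable borel"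
proof -
  have [measurable]: "z1 \<in> borel_measurable borel" "z2 \<in> borel_measurable borel"
    using assms by (auto simp: admissible_def)
  show ?thesis
    unfolding Psi_def by measurable
qed

lemma borel_measurable_Psi_slope:
  assumes "admissible z1 z2"
  shows "(\<lambda>w. Psi_slope c z1 z2 lam mu w) \<in> borel_measurable borel"
proof -
  have [measurable]: "z1 \<in> borel_measurable borel" "z2 \<in> borel_measurable borel"
    using assms by (auto simp: admissible_def)
  show ?thesis
    unfolding Psi_slope_def denom_def by measurable
qed

lemma integrable_Psi:
  assumes "c > 0" "admissible z1 z2" "0 \<le> lam"
  shows "integrable lborel (\<lambda>w. Psi c z1 z2 lam w)"
proof (rule Bochner_Integration.integrable_bound)
  show "integrable lborel (\<lambda>w. ((c + 2*lam) / c)^2 * (1 / (c^2 + w^2)))"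
    using assms by (intro integrable_mult_right integrable_inverse_c2_plus_square)
  show "AE w in lborel. norm (Psi c z1 z2 lam w) \<le> norm (((c + 2*lam) / c)^2 * (1 / (c^2 + w^2)))"
    using assms norm_Psi_le[OF assms(1,3) order_refl] by (auto simp: admissible_def)
qed (simp add: borel_measurable_Psi[OF assms(2)])

lemma integrable_Psi_slope:
  assumes "c > 0" "admissible z1 z2" "0 \<le> lam" "0 \<le> mu"
  shows "integrable lborel (\<lambda>w. Psi_slope c z1 z2 lam mu w)"
proof (rule Bochner_Integration.integrable_bound)
  let ?C = "(3*c + 4*(lam + mu)) * ((c + 2*(lam + mu)) / c)^4 / c^2"
  show "integrable lborel (\<lambda>w. ?C * (1 / (c^2 + w^2)))"
    using assms by (intro integrable_mult_right integrable_inverse_c2_plus_square)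
  show "AE w in lborel. norm (Psi_slope c z1 z2 lam mu w) \<le> norm (?C * (1 / (c^2 + w^2)))"
    using assms norm_Psi_slope_le[OF assms(1,3) _ assms(4), of "lam + mu"]
    by (auto simp: admissible_def)
qed (simp add: borel_measurable_Psi_slope[OF assms(2)])

lemma PsiInt_difference_quotient:
  assumes "c > 0" "admissible z1 z2" "0 \<le> lam" "0 \<le> mu" "mu \<noteq> lam"
  shows "(PsiInt c z1 z2 mu - PsiInt c z1 z2 lam) /\<^sub>R (mu - lam) = (\<integral>w. Psi_slope c z1 z2 lam mu w \<partial>lborel)"
proof -
  have "(PsiInt c z1 z2 mu - PsiInt c z1 z2 lam) /\<^sub>R (mu - lam)
      = (\<integral>w. (Psi c z1 z2 mu w - Psi c z1 z2 lam w) /\<^sub>R (mu - lam) \<partial>lborel)"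
    unfolding PsiInt_def using assms by (simp add: integrable_Psi)
  also have "\<dots> = (\<integral>w. Psi_slope c z1 z2 lam mu w \<partial>lborel)"
    using assms by (intro Bochner_Integration.integral_cong) (auto simp: Psi_slope_eq admissible_def)
  finally show ?thesis .
qed

lemma continuous_on_integral_Psi_slope:
  assumes "c > 0" "admissible z1 z2"
  shows "continuous_on ({0..} \<times> {0..}) (\<lambda>p. \<integral>w. Psi_slope c z1 z2 (fst p) (snd p) w \<partial>lborel)"
  unfolding continuous_on_def
proof
  fix p :: "real \<times> real"
  assume p: "p \<in> {0..} \<times> {0..}"
  define L where "L = fst p + snd p + 1"
  define C where "C = (3*c + 4*L) * ((c + 2*L) / c)^4 / c^2"
  show "((\<lambda>q. \<integral>w. Psi_slope c z1 z2 (fst q) (snd q) w \<partial>lborel)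
      \<longlongrightarrow> (\<integral>w. Psi_slope c z1 z2 (fst p) (snd p) w \<partial>lborel)) (at p within {0..} \<times> {0..})"
  proof (rule tendsto_integral_dominated[where g="\<lambda>w. C * (1 / (c^2 + w^2))"])
    show "integrable lborel (\<lambda>w. C * (1 / (c^2 + w^2)))"
      using assms by (intro integrable_mult_right integrable_inverse_c2_plus_square)
    have "\<forall>\<^sub>F q in at p within {0..} \<times> {0..}. fst q < fst p + 1"
      using order_tendstoD(2)[OF tendsto_fst[OF tendsto_ident_at[of p]], where a="fst p + 1"] by simp
    moreover have "\<forall>\<^sub>F q in at p within {0..} \<times> {0..}. snd q < snd p + 1"
      using order_tendstoD(2)[OF tendsto_snd[OF tendsto_ident_at[of p]], where a="snd p + 1"] by simp
    moreover have "\<forall>\<^sub>F q in at p within {0..} \<times> {0..}. q \<in> {0..} \<times> {0..}"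
      by (simp add: eventually_at_filter)
    ultimately show "\<forall>\<^sub>F q in at p within {0..} \<times> {0..}.
        AE w in lborel. norm (Psi_slope c z1 z2 (fst q) (snd q) w) \<le> C * (1 / (c^2 + w^2))"
    proof eventually_elim
      case (elim q)
      then show ?case
        using p assms norm_Psi_slope_le[OF assms(1), of "fst q" L "snd q" z1 _ z2]
        by (auto simp: C_def L_def admissible_def mem_Times_iff)
    qed
    show "AE w in lborel. ((\<lambda>q. Psi_slope c z1 z2 (fst q) (snd q) w)
        \<longlongrightarrow> Psi_slope c z1 z2 (fst p) (snd p) w) (at p within {0..} \<times> {0..})"
      using p assms
      by (auto intro!: isCont_tendsto_compose[OF isCont_Psi_slope] tendsto_ident_at simp: admissible_def)
  qed (simp_all add: borel_measurable_Psi_slope[OF assms(2)])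
qed

lemma has_vector_derivative_PsiInt:
  assumes "c > 0" "admissible z1 z2" "0 \<le> lam"
  shows "(PsiInt c z1 z2 has_vector_derivative (\<integral>w. Psi_slope c z1 z2 lam lam w \<partial>lborel)) (at lam within {0..})"
proof -
  have "continuous_on {0..} (\<lambda>mu. \<integral>w. Psi_slope c z1 z2 lam mu w \<partial>lborel)"
    using continuous_on_compose2[OF continuous_on_integral_Psi_slope[OF assms(1,2)]
        continuous_on_Pair[OF continuous_on_const continuous_on_id]] assms(3)
    by auto
  then have "((\<lambda>mu. \<integral>w. Psi_slope c z1 z2 lam mu w \<partial>lborel) \<longlongrightarrow> (\<integral>w. Psi_slope c z1 z2 lam lam w \<partial>lborel))
      (at lam within {0..})"
    using assms(3) by (simp add: continuous_on_def)
  also have "?this \<longleftrightarrow> ((\<lambda>mu. (PsiInt c z1 z2 mu - PsiInt c z1 z2 lam) /\<^sub>R (mu - lam))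
      \<longlongrightarrow> (\<integral>w. Psi_slope c z1 z2 lam lam w \<partial>lborel)) (at lam within {0..})"
    using assms by (intro Lim_cong_within) (auto simp: PsiInt_difference_quotient)
  finally show ?thesis
    by (simp add: has_vector_derivative_iff_difference_quotient)
qed

lemma continuous_on_PsiInt_derivative:
  assumes "c > 0" "admissible z1 z2"
  shows "continuous_on {0..} (\<lambda>lam. \<integral>w. Psi_slope c z1 z2 lam lam w \<partial>lborel)"
  using continuous_on_compose2[OF continuous_on_integral_Psi_slope[OF assms]
      continuous_on_Pair[OF continuous_on_id continuous_on_id]]
  by auto

lemma norm_PsiInt_derivative_le:
  assumes "c > 0" "admissible z1 z2" "0 \<le> lam" "lam \<le> L"
  shows "norm (\<integral>w. Psi_slope c z1 z2 lam lam w \<partial>lborel)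
    \<le> (3*c + 4*L) * ((c + 2*L) / c)^4 / c^2 * (\<integral>w. 1 / (c^2 + w^2) \<partial>lborel)"
proof -
  let ?C = "(3*c + 4*L) * ((c + 2*L) / c)^4 / c^2"
  have "norm (\<integral>w. Psi_slope c z1 z2 lam lam w \<partial>lborel) \<le> (\<integral>w. ?C * (1 / (c^2 + w^2)) \<partial>lborel)"
    using assms norm_Psi_slope_le[OF assms(1,3,4,3,4)]
    by (intro Bochner_Integration.integral_norm_bound_integral integrable_Psi_slope integrable_mult_right
        integrable_inverse_c2_plus_square) (auto simp: admissible_def)
  then show ?thesis by (simp only: integral_mult_right_zero)
qed

lemma norm_PsiInt_diff_le_weighted:
  assumes "c > 0" "admissible z1 z2" "admissible y1 y2" "0 \<le> lam" "A \<in> sets lborel"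
    and "\<And>w. norm (Psi c z1 z2 lam w - Psi c y1 y2 lam w)
      \<le> a * (1 / (c^2 + w^2)) + b * (indicator (- A) w / (c^2 + w^2))"
  shows "norm (PsiInt c z1 z2 lam - PsiInt c y1 y2 lam)
    \<le> a * (\<integral>w. 1 / (c^2 + w^2) \<partial>lborel) + b * (\<integral>w. indicator (- A) w / (c^2 + w^2) \<partial>lborel)"
proof -
  have tail: "integrable lborel (\<lambda>w. indicator (- A) w / (c^2 + w^2))"
    using integrable_mult_indicator[OF sets.compl_sets[OF assms(5)] integrable_inverse_c2_plus_square[OF assms(1)]]
    by (simp add: Compl_eq_Diff_UNIV)
  have summands: "integrable lborel (\<lambda>w. a * (1 / (c^2 + w^2)))"
      "integrable lborel (\<lambda>w. b * (indicator (- A) w / (c^2 + w^2)))"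
    using integrable_mult_right[OF integrable_inverse_c2_plus_square[OF assms(1)]] integrable_mult_right[OF tail]
    by blast+
  have "norm (PsiInt c z1 z2 lam - PsiInt c y1 y2 lam)
      = norm (\<integral>w. Psi c z1 z2 lam w - Psi c y1 y2 lam w \<partial>lborel)"
    unfolding PsiInt_def using assms by (simp add: integrable_Psi)
  also have "\<dots> \<le> (\<integral>w. a * (1 / (c^2 + w^2)) + b * (indicator (- A) w / (c^2 + w^2)) \<partial>lborel)"
    using assms Bochner_Integration.integrable_add[OF summands]
    by (intro Bochner_Integration.integral_norm_bound_integral Bochner_Integration.integrable_diff integrable_Psi)
  also have "\<dots> = a * (\<integral>w. 1 / (c^2 + w^2) \<partial>lborel) + b * (\<integral>w. indicator (- A) w / (c^2 + w^2) \<partial>lborel)"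
    by (simp only: Bochner_Integration.integral_add[OF summands] integral_mult_right_zero)
  finally show ?thesis .
qed

definition PsiInt_lipschitz_const :: "real \<Rightarrow> real \<Rightarrow> real" where
  "PsiInt_lipschitz_const c L =
     (((c + 2*L) / c)^2 + L / c * ((c + 2*L) / c)^3) * (\<integral>w. 1 / (c^2 + w^2) \<partial>lborel) + 4 * ((c + 2*L) / c)^2"

lemma PsiInt_lipschitz_const_pos:
  assumes "c > 0" "0 \<le> L"
  shows "0 < PsiInt_lipschitz_const c L"
proof -
  have "0 \<le> (\<integral>w. 1 / (c^2 + w^2) \<partial>lborel)"
    by (intro Bochner_Integration.integral_nonneg) simp
  then show ?thesis
    using assms unfolding PsiInt_lipschitz_const_def by (intro add_nonneg_pos) auto
qed

lemma norm_Psi_diff_le_indicator: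
  assumes "c > 0" "admissible z1 z2" "admissible y1 y2" "0 \<le> lam" "lam \<le> L" "0 \<le> \<delta>"
    and "\<And>w. w \<in> A \<Longrightarrow> norm (z1 w - y1 w) \<le> \<delta> \<and> norm (z2 w - y2 w) \<le> \<delta>"
  shows "norm (Psi c z1 z2 lam w - Psi c y1 y2 lam w)
    \<le> \<delta> * (((c + 2*L) / c)^2 + L / c * ((c + 2*L) / c)^3) * (1 / (c^2 + w^2))
      + 2 * ((c + 2*L) / c)^2 * (indicator (- A) w / (c^2 + w^2))"
proof -
  have bounded: "norm (z1 w) \<le> 1" "norm (z2 w) \<le> 1" "norm (y1 w) \<le> 1" "norm (y2 w) \<le> 1"
    using assms(2,3) by (auto simp: admissible_def)
  show ?thesis
  proof (cases "w \<in> A")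
    case True
    then show ?thesis
      using norm_Psi_diff_le[of c lam L z1 w z2 y1 y2 \<delta>, OF assms(1,4,5) bounded] assms(7)[OF True] by simp
  next
    case False
    have "norm (Psi c z1 z2 lam w - Psi c y1 y2 lam w) \<le> norm (Psi c z1 z2 lam w) + norm (Psi c y1 y2 lam w)"
      by (rule norm_triangle_ineq4)
    also have "\<dots> \<le> 2 * ((c + 2*L) / c)^2 / (c^2 + w^2)"
      using norm_Psi_le[of c lam L z1 w z2, OF assms(1,4,5) bounded(1,2)]
        norm_Psi_le[of c lam L y1 w y2, OF assms(1,4,5) bounded(3,4)] by simp
    moreover have "0 \<le> \<delta> * (((c + 2*L) / c)^2 + L / c * ((c + 2*L) / c)^3) * (1 / (c^2 + w^2))"
      using assms by simp
    ultimately show ?thesis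
      using False by simp
  qed
qed

lemma norm_PsiInt_diff_le:
  assumes "c > 0" "admissible z1 z2" "admissible y1 y2" "0 \<le> lam" "lam \<le> L" "A \<in> sets lborel" "a \<in> A"
  shows "norm (PsiInt c z1 z2 lam - PsiInt c y1 y2 lam)
    \<le> PsiInt_lipschitz_const c L * (max (SUP w\<in>A. norm (z1 w - y1 w)) (SUP w\<in>A. norm (z2 w - y2 w))
        + (\<integral>w. indicator (- A) w / (c^2 + w^2) \<partial>lborel) / 2)"
proof -
  define \<delta> where "\<delta> = max (SUP w\<in>A. norm (z1 w - y1 w)) (SUP w\<in>A. norm (z2 w - y2 w))"
  define CD where "CD = ((c + 2*L) / c)^2 + L / c * ((c + 2*L) / c)^3"
  define CP where "CP = ((c + 2*L) / c)^2"
  define I where "I = (\<integral>w. 1 / (c^2 + w^2) \<partial>lborel)"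
  define T where "T = (\<integral>w. indicator (- A) w / (c^2 + w^2) \<partial>lborel)"
  have bounded: "norm (z1 w) \<le> 1" "norm (z2 w) \<le> 1" "norm (y1 w) \<le> 1" "norm (y2 w) \<le> 1" for w
    using assms(2,3) by (auto simp: admissible_def)
  have \<delta>: "norm (z1 w - y1 w) \<le> \<delta> \<and> norm (z2 w - y2 w) \<le> \<delta>" if "w \<in> A" for w
    unfolding \<delta>_def using norm_diff_le_SUP[of z1 y1, OF bounded(1) bounded(3) that]
      norm_diff_le_SUP[of z2 y2, OF bounded(2) bounded(4) that] by (auto simp: le_max_iff_disj)
  have "0 \<le> \<delta>"
    unfolding \<delta>_def using SUP_norm_diff_nonneg[of z1 y1, OF bounded(1) bounded(3) assms(7)]
    by (simp add: le_max_iff_disj)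
  have "norm (PsiInt c z1 z2 lam - PsiInt c y1 y2 lam) \<le> \<delta> * CD * I + 2 * CP * T"
    unfolding I_def T_def CD_def CP_def
    by (rule norm_PsiInt_diff_le_weighted[OF assms(1-4,6)
          norm_Psi_diff_le_indicator[where A=A, OF assms(1-5) \<open>0 \<le> \<delta>\<close> \<delta>]])
  also have "\<dots> \<le> PsiInt_lipschitz_const c L * (\<delta> + T / 2)"
  proof -
    have "0 \<le> CD" "0 \<le> CP" "0 \<le> I" "0 \<le> T"
      using assms(1,4,5) unfolding CD_def CP_def I_def T_def
      by (auto intro!: Bochner_Integration.integral_nonneg)
    then have "0 \<le> 4 * CP * \<delta> + CD * I * T / 2"
      using \<open>0 \<le> \<delta>\<close> by simp
    then show ?thesis
      unfolding PsiInt_lipschitz_const_def CD_def[symmetric] I_def[symmetric] unfolding CP_def[symmetric]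
      by (simp add: algebra_simps)
  qed
  finally show ?thesis
    unfolding \<delta>_def T_def .
qed

lemma norm_PsiInt_diff_le_window:
  fixes W :: real
  assumes "c > 0" "admissible z1 z2" "admissible y1 y2" "0 \<le> lam" "lam \<le> L" "W > 0"
  shows "norm (PsiInt c z1 z2 lam - PsiInt c y1 y2 lam)
    \<le> PsiInt_lipschitz_const c L
        * (max (SUP w\<in>{-W..W}. norm (z1 w - y1 w)) (SUP w\<in>{-W..W}. norm (z2 w - y2 w)) + 1 / W)"
proof -
  have "norm (PsiInt c z1 z2 lam - PsiInt c y1 y2 lam)
      \<le> PsiInt_lipschitz_const c L
        * (max (SUP w\<in>{-W..W}. norm (z1 w - y1 w)) (SUP w\<in>{-W..W}. norm (z2 w - y2 w))
           + (\<integral>w. indicator (- {-W..W}) w / (c^2 + w^2) \<partial>lborel) / 2)"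
    using assms by (intro norm_PsiInt_diff_le[where a=0]) auto
  also have "\<dots> \<le> PsiInt_lipschitz_const c L
        * (max (SUP w\<in>{-W..W}. norm (z1 w - y1 w)) (SUP w\<in>{-W..W}. norm (z2 w - y2 w)) + 1 / W)"
    using integral_tail_inverse_c2_plus_square[OF assms(6), of c] PsiInt_lipschitz_const_pos[OF assms(1), of L] assms
    by (intro mult_left_mono add_left_mono) auto
  finally show ?thesis .
qed

lemma norm_PsiInt_diff_le_sup:
  assumes "c > 0" "admissible z1 z2" "admissible y1 y2" "0 \<le> lam" "lam \<le> L"
  shows "norm (PsiInt c z1 z2 lam - PsiInt c y1 y2 lam)
    \<le> PsiInt_lipschitz_const c L * max (SUP w. norm (z1 w - y1 w)) (SUP w. norm (z2 w - y2 w))"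
  using norm_PsiInt_diff_le[OF assms, of UNIV 0] by simp

theorem lemma1:
  fixes c \<eta>0 :: real
  assumes "c > 0" and "\<eta>0 > 0"
  shows "(\<exists>B. \<forall>z1 z2. admissible z1 z2 \<longrightarrow>
            (\<exists>F'. (\<forall>lam\<in>{0..}. (PsiInt c z1 z2 has_vector_derivative F' lam) (at lam within {0..}))
                 \<and> continuous_on {0..} F'
                 \<and> (\<forall>lam\<in>{0..\<eta>0}. norm (F' lam) \<le> B)))
       \<and> (\<exists>K>0. \<forall>z1 z2 y1 y2. admissible z1 z2 \<longrightarrow> admissible y1 y2 \<longrightarrow>
            (\<forall>W::real. W \<ge> 1 \<longrightarrow>
               (\<forall>lam\<in>{0..\<eta>0}. norm (PsiInt c z1 z2 lam - PsiInt c y1 y2 lam)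
                  \<le> K * (max (SUP w\<in>{-W..W}. norm (z1 w - y1 w))
                              (SUP w\<in>{-W..W}. norm (z2 w - y2 w)) + 1 / W)))
            \<and> (\<forall>lam\<in>{0..\<eta>0}. norm (PsiInt c z1 z2 lam - PsiInt c y1 y2 lam)
                  \<le> K * max (SUP w. norm (z1 w - y1 w)) (SUP w. norm (z2 w - y2 w))))"
proof -
  define B where "B = (3*c + 4*\<eta>0) * ((c + 2*\<eta>0) / c)^4 / c^2 * (\<integral>w. 1 / (c^2 + w^2) \<partial>lborel)"
  define K where "K = PsiInt_lipschitz_const c \<eta>0"
  have "\<exists>F'. (\<forall>lam\<in>{0..}. (PsiInt c z1 z2 has_vector_derivative F' lam) (at lam within {0..}))
      \<and> continuous_on {0..} F' \<and> (\<forall>lam\<in>{0..\<eta>0}. norm (F' lam) \<le> B)" if "admissible z1 z2" for z1 z2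
    using that assms has_vector_derivative_PsiInt continuous_on_PsiInt_derivative norm_PsiInt_derivative_le
    unfolding B_def by (intro exI[of _ "\<lambda>lam. \<integral>w. Psi_slope c z1 z2 lam lam w \<partial>lborel"]) auto
  moreover have "K > 0"
    unfolding K_def using assms by (simp add: PsiInt_lipschitz_const_pos)
  moreover have "norm (PsiInt c z1 z2 lam - PsiInt c y1 y2 lam)
      \<le> K * (max (SUP w\<in>{-W..W}. norm (z1 w - y1 w)) (SUP w\<in>{-W..W}. norm (z2 w - y2 w)) + 1 / W)"
    if "admissible z1 z2" "admissible y1 y2" "W \<ge> 1" "lam \<in> {0..\<eta>0}" for z1 z2 y1 y2 W lam
    unfolding K_def using assms that by (intro norm_PsiInt_diff_le_window) auto
  moreover have "norm (PsiInt c z1 z2 lam - PsiInt c y1 y2 lam)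
      \<le> K * max (SUP w. norm (z1 w - y1 w)) (SUP w. norm (z2 w - y2 w))"
    if "admissible z1 z2" "admissible y1 y2" "lam \<in> {0..\<eta>0}" for z1 z2 y1 y2 lam
    unfolding K_def using assms that by (intro norm_PsiInt_diff_le_sup) auto
  ultimately show ?thesis
    by (intro conjI[OF exI[of _ B] exI[of _ K]]) blast+
qed

end
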